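(* For every $\gamma\in[0,1)$, every $\epsilon\ge 0$, $\Delta\ge 0$ and every integer $k\ge 1$, there exist a deterministic MDP with discount factor $\gamma$ and $k+1$ states, an initial value $v_0$ with $\operatorname{span}(v_*-v_0)=\Delta$, error terms $\epsilon_1,\dots,\epsilon_{k-1}$ with $\operatorname{span}(\epsilon_j)\le\epsilon$, and a run of Approximate Value Iteration with these errors such that some policy $\pi_k$ greedy with respect to $v_{k-1}$ satisfies $$\|v_*-v_{\pi_k}\|_\infty = \frac{1}{1-\gamma}\left(\frac{\gamma-\gamma^k}{1-\gamma}\,\epsilon+\gamma^k\Delta\right).$$
   Context: A Markov Decision Process with finite state space $S$, finite action space $A$, reward function $r(s,a)$, transition probabilities $p(s'|s,a)$ and discount factor $\gamma\in[0,1)$. For a (deterministic, stationary) policy $\pi:S\to A$, let $r_\pi(s)=r(s,\pi(s))$, let $P_\pi$ be the stochastic matrix $P_\pi(s,s')=p(s'|s,\pi(s))$, and let $T_\pi v=r_\pi+\gamma P_\pi v$ be the Bellman operator of $\pi$; $v_\pi$ is its unique fixed point (the expected $\gamma$-discounted total reward of $\pi$). The Bellman optimality operator is $Tv=\max_\pi T_\pi v$ (componentwise), $v_*$ is its fixed point (the optimal value), and a policy $\pi$ is greedy with respect to $v$ if $T_\pi v=Tv$. For a function $f:S\to\mathbb R$, $\operatorname{span}(f)=\max_s f(s)-\min_s f(s)$. Approximate Value Iteration: starting from an arbitrary $v_0:S\to\mathbb R$, for $j\ge 0$ pick any policy $\pi_{j+1}$ greedy with respect to $v_j$ and set $v_{j+1}=T_{\pi_{j+1}}v_j+\epsilon_{j+1}$,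 where $\epsilon_{j+1}:S\to\mathbb R$ are arbitrary error terms. *)

theory Defs
  imports Complex_Main
begin

text \<open>Value functions are functions nat => real, only their values on S matter.\<close>

definition is_mdp :: "nat set \<Rightarrow> nat set \<Rightarrow> (nat \<Rightarrow> nat \<Rightarrow> real) \<Rightarrow> (nat \<Rightarrow> nat \<Rightarrow> nat \<Rightarrow> real) \<Rightarrow> bool" where
  "is_mdp S A r p \<longleftrightarrow> finite S \<and> S \<noteq> {} \<and> finite A \<and> A \<noteq> {} \<and>
     (\<forall>s\<in>S. \<forall>a\<in>A. (\<forall>t\<in>S. 0 \<le> p s a t) \<and> (\<Sum>t\<in>S. p s a t) = 1)"

definition deterministic_mdp :: "nat set \<Rightarrow> nat set \<Rightarrow> (nat \<Rightarrow> nat \<Rightarrow> real) \<Rightarrow> (nat \<Rightarrow> nat \<Rightarrow> nat \<Rightarrow> real) \<Rightarrow> bool" where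
  "deterministic_mdp S A r p \<longleftrightarrow> is_mdp S A r p \<and>
     (\<forall>s\<in>S. \<forall>a\<in>A. \<exists>s'\<in>S. \<forall>t\<in>S. p s a t = (if t = s' then 1 else 0))"

definition is_policy :: "nat set \<Rightarrow> nat set \<Rightarrow> (nat \<Rightarrow> nat) \<Rightarrow> bool" where
  "is_policy S A \<pi> \<longleftrightarrow> (\<forall>s\<in>S. \<pi> s \<in> A)"

definition bellman_pi :: "nat set \<Rightarrow> (nat \<Rightarrow> nat \<Rightarrow> real) \<Rightarrow> (nat \<Rightarrow> nat \<Rightarrow> nat \<Rightarrow> real) \<Rightarrow> real \<Rightarrow> (nat \<Rightarrow> nat) \<Rightarrow> (nat \<Rightarrow> real) \<Rightarrow> nat \<Rightarrow> real" where
  "bellman_pi S r p g \<pi> v s = r s (\<pi> s) + g * (\<Sum>t\<in>S. p s (\<pi> s) t * v t)"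

definition bellman_opt :: "nat set \<Rightarrow> nat set \<Rightarrow> (nat \<Rightarrow> nat \<Rightarrow> real) \<Rightarrow> (nat \<Rightarrow> nat \<Rightarrow> nat \<Rightarrow> real) \<Rightarrow> real \<Rightarrow> (nat \<Rightarrow> real) \<Rightarrow> nat \<Rightarrow> real" where
  "bellman_opt S A r p g v s = Max ((\<lambda>a. r s a + g * (\<Sum>t\<in>S. p s a t * v t)) ` A)"

definition value_pi :: "nat set \<Rightarrow> (nat \<Rightarrow> nat \<Rightarrow> real) \<Rightarrow> (nat \<Rightarrow> nat \<Rightarrow> nat \<Rightarrow> real) \<Rightarrow> real \<Rightarrow> (nat \<Rightarrow> nat) \<Rightarrow> nat \<Rightarrow> real" where
  "value_pi S r p g \<pi> = (THE v. (\<forall>s\<in>S. bellman_pi S r p g \<pi> v s = v s) \<and> (\<forall>s. s \<notin> S \<longrightarrow> v s = 0))"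

definition value_opt :: "nat set \<Rightarrow> nat set \<Rightarrow> (nat \<Rightarrow> nat \<Rightarrow> real) \<Rightarrow> (nat \<Rightarrow> nat \<Rightarrow> nat \<Rightarrow> real) \<Rightarrow> real \<Rightarrow> nat \<Rightarrow> real" where
  "value_opt S A r p g = (THE v. (\<forall>s\<in>S. bellman_opt S A r p g v s = v s) \<and> (\<forall>s. s \<notin> S \<longrightarrow> v s = 0))"

definition greedy :: "nat set \<Rightarrow> nat set \<Rightarrow> (nat \<Rightarrow> nat \<Rightarrow> real) \<Rightarrow> (nat \<Rightarrow> nat \<Rightarrow> nat \<Rightarrow> real) \<Rightarrow> real \<Rightarrow> (nat \<Rightarrow> nat) \<Rightarrow> (nat \<Rightarrow> real) \<Rightarrow> bool" where
  "greedy S A r p g \<pi> v \<longleftrightarrow> is_policy S A \<pi> \<and>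
     (\<forall>s\<in>S. bellman_pi S r p g \<pi> v s = bellman_opt S A r p g v s)"

definition span_on :: "nat set \<Rightarrow> (nat \<Rightarrow> real) \<Rightarrow> real" where
  "span_on S f = Max (f ` S) - Min (f ` S)"

definition sup_norm_on :: "nat set \<Rightarrow> (nat \<Rightarrow> real) \<Rightarrow> real" where
  "sup_norm_on S f = Max ((\<lambda>s. \<bar>f s\<bar>) ` S)"

end

theory Submission
  imports Defs
begin

(*
  The witness is a deterministic "chain" MDP on
  the states 0..k: action 0 moves from s to s - 1 (state 0 is absorbing) at no cost, while
  action 1 at the top state k stays at k and costs C >= 0 (elsewhere it behaves like action 0).
  Hence v_* = 0, and the policy that stays at k has value -C/(1-g) there.

  Finally it builds the AVI run: v_j is a single bump of height h_j at state j + 1, with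
  h_0 = Delta and h_(j+1) = g h_j + eps; the error eps_(j+1) is a bump of height eps at
  state j + 2, and every step moves the bump one state up.  Choosing C = g h_(k-1) makes
  staying at k greedy for v_(k-1), and its loss C/(1-g) is exactly the claimed bound.
*)

lemma abs_le_sup_norm_on: "finite S \<Longrightarrow> s \<in> S \<Longrightarrow> \<bar>f s\<bar> \<le> sup_norm_on S f"
  unfolding sup_norm_on_def by (rule Max_ge) auto

lemma fixed_points_coincide:
  fixes F :: "(nat \<Rightarrow> real) \<Rightarrow> nat \<Rightarrow> real"
  assumes "finite S" "g < 1"
    and contraction: "\<And>s. s \<in> S \<Longrightarrow> \<bar>F u s - F w s\<bar> \<le> g * sup_norm_on S (\<lambda>t. u t - w t)"
    and fixed_u: "\<forall>s\<in>S. F u s = u s" and fixed_w: "\<forall>s\<in>S. F w s = w s"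
  shows "\<forall>s\<in>S. u s = w s"
proof (cases "S = {}")
  case False
  define M where "M = sup_norm_on S (\<lambda>t. u t - w t)"
  have "M \<in> (\<lambda>t. \<bar>u t - w t\<bar>) ` S"
    unfolding M_def sup_norm_on_def using \<open>finite S\<close> False by (intro Max_in) auto
  then obtain s0 where "s0 \<in> S" and M_at: "M = \<bar>u s0 - w s0\<bar>" by blast
  then have "0 \<le> M" by simp
  have "M = \<bar>F u s0 - F w s0\<bar>" using fixed_u fixed_w \<open>s0 \<in> S\<close> by (simp add: M_at)
  also have "\<dots> \<le> g * M" unfolding M_def by (rule contraction[OF \<open>s0 \<in> S\<close>])
  finally have "M \<le> g * M" .
  then have "(1 - g) * M \<le> 0" by (simp add: algebra_simps)
  then have "M \<le> 0" using \<open>g < 1\<close> by (simp add: mult_le_0_iff)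
  with \<open>0 \<le> M\<close> have "M = 0" by simp
  then show ?thesis
    using abs_le_sup_norm_on[OF \<open>finite S\<close>, of _ "\<lambda>t. u t - w t"] by (fastforce simp: M_def)
qed simp

lemma the_fixed_point_eqI:
  fixes F :: "(nat \<Rightarrow> real) \<Rightarrow> nat \<Rightarrow> real"
  assumes "finite S" "g < 1"
    and contraction: "\<And>u w s. s \<in> S \<Longrightarrow> \<bar>F u s - F w s\<bar> \<le> g * sup_norm_on S (\<lambda>t. u t - w t)"
    and fixed: "\<forall>s\<in>S. F v s = v s" and outside: "\<forall>s. s \<notin> S \<longrightarrow> v s = 0"
  shows "(THE u. (\<forall>s\<in>S. F u s = u s) \<and> (\<forall>s. s \<notin> S \<longrightarrow> u s = 0)) = v"
proof (rule the_equality)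
  fix u assume u: "(\<forall>s\<in>S. F u s = u s) \<and> (\<forall>s. s \<notin> S \<longrightarrow> u s = 0)"
  have "\<forall>s\<in>S. u s = v s"
    using fixed_points_coincide[where F = F and u = u and w = v, OF assms(1,2) contraction] u fixed
    by blast
  with u outside show "u = v" by (metis ext)
qed (use fixed outside in blast)

lemma expectation_diff_le:
  assumes "is_mdp S A r p" "s \<in> S" "a \<in> A"
  shows "\<bar>(\<Sum>t\<in>S. p s a t * u t) - (\<Sum>t\<in>S. p s a t * w t)\<bar> \<le> sup_norm_on S (\<lambda>t. u t - w t)"
proof -
  let ?M = "sup_norm_on S (\<lambda>t. u t - w t)"
  have S: "finite S" and p_nonneg: "\<forall>t\<in>S. 0 \<le> p s a t" and p_sum: "(\<Sum>t\<in>S. p s a t) = 1"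
    using assms unfolding is_mdp_def by auto
  have "\<bar>(\<Sum>t\<in>S. p s a t * u t) - (\<Sum>t\<in>S. p s a t * w t)\<bar> = \<bar>\<Sum>t\<in>S. p s a t * (u t - w t)\<bar>"
    by (simp add: sum_subtractf right_diff_distrib)
  also have "\<dots> \<le> (\<Sum>t\<in>S. p s a t * \<bar>u t - w t\<bar>)"
    using sum_abs[of "\<lambda>t. p s a t * (u t - w t)" S] p_nonneg by (simp add: abs_mult)
  also have "\<dots> \<le> (\<Sum>t\<in>S. p s a t * ?M)"
    using p_nonneg abs_le_sup_norm_on[OF S] by (intro sum_mono mult_left_mono) auto
  also have "\<dots> = ?M"
    using p_sum by (simp add: sum_distrib_right[symmetric])
  finally show ?thesis .
qed

lemma bellman_pi_contraction:
  assumes "is_mdp S A r p" "is_policy S A \<pi>" "0 \<le> g" "s \<in> S"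
  shows "\<bar>bellman_pi S r p g \<pi> u s - bellman_pi S r p g \<pi> w s\<bar> \<le> g * sup_norm_on S (\<lambda>t. u t - w t)"
proof -
  have "\<pi> s \<in> A" using assms(2,4) by (simp add: is_policy_def)
  have "\<bar>bellman_pi S r p g \<pi> u s - bellman_pi S r p g \<pi> w s\<bar>
        = g * \<bar>(\<Sum>t\<in>S. p s (\<pi> s) t * u t) - (\<Sum>t\<in>S. p s (\<pi> s) t * w t)\<bar>"
    using \<open>0 \<le> g\<close> by (simp add: bellman_pi_def abs_mult flip: right_diff_distrib)
  also have "\<dots> \<le> g * sup_norm_on S (\<lambda>t. u t - w t)"
    using expectation_diff_le[OF assms(1,4) \<open>\<pi> s \<in> A\<close>] \<open>0 \<le> g\<close> by (rule mult_left_mono)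
  finally show ?thesis .
qed

lemma Max_image_dist_le:
  fixes f h :: "'a \<Rightarrow> real"
  assumes "finite A" "A \<noteq> {}" and close: "\<And>a. a \<in> A \<Longrightarrow> \<bar>f a - h a\<bar> \<le> c"
  shows "\<bar>Max (f ` A) - Max (h ` A)\<bar> \<le> c"
proof -
  have "f a \<le> Max (h ` A) + c" "h a \<le> Max (f ` A) + c" if "a \<in> A" for a
    using close[OF that] Max_ge[OF _ imageI[OF that], of f] Max_ge[OF _ imageI[OF that], of h]
      \<open>finite A\<close> by auto
  then have "Max (f ` A) \<le> Max (h ` A) + c" "Max (h ` A) \<le> Max (f ` A) + c"
    using assms(1,2) by (simp_all add: Max_le_iff)
  then show ?thesis by linarith
qed

lemma bellman_opt_contraction:
  assumes "is_mdp S A r p" "0 \<le> g" "s \<in> S"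
  shows "\<bar>bellman_opt S A r p g u s - bellman_opt S A r p g w s\<bar> \<le> g * sup_norm_on S (\<lambda>t. u t - w t)"
  unfolding bellman_opt_def
proof (rule Max_image_dist_le)
  show "finite A" "A \<noteq> {}" using assms(1) by (auto simp: is_mdp_def)
  fix a assume "a \<in> A"
  show "\<bar>r s a + g * (\<Sum>t\<in>S. p s a t * u t) - (r s a + g * (\<Sum>t\<in>S. p s a t * w t))\<bar>
        \<le> g * sup_norm_on S (\<lambda>t. u t - w t)"
    using mult_left_mono[OF expectation_diff_le[OF assms(1,3) \<open>a \<in> A\<close>] \<open>0 \<le> g\<close>] \<open>0 \<le> g\<close>
    by (simp add: abs_mult flip: right_diff_distrib)
qed

lemma value_pi_eqI:
  assumes "is_mdp S A r p" "is_policy S A \<pi>" "0 \<le> g" "g < 1"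
    and "\<forall>s\<in>S. bellman_pi S r p g \<pi> v s = v s" "\<forall>s. s \<notin> S \<longrightarrow> v s = 0"
  shows "value_pi S r p g \<pi> = v"
  unfolding value_pi_def
proof (rule the_fixed_point_eqI[where g = g])
  show "finite S" using assms(1) by (simp add: is_mdp_def)
  show "\<bar>bellman_pi S r p g \<pi> u s - bellman_pi S r p g \<pi> w s\<bar> \<le> g * sup_norm_on S (\<lambda>t. u t - w t)"
    if "s \<in> S" for u w s
    using bellman_pi_contraction[OF assms(1-3) that] .
qed (use assms in auto)

lemma value_opt_eqI:
  assumes "is_mdp S A r p" "0 \<le> g" "g < 1"
    and "\<forall>s\<in>S. bellman_opt S A r p g v s = v s" "\<forall>s. s \<notin> S \<longrightarrow> v s = 0"
  shows "value_opt S A r p g = v"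
  unfolding value_opt_def
proof (rule the_fixed_point_eqI[where g = g])
  show "finite S" using assms(1) by (simp add: is_mdp_def)
  show "\<bar>bellman_opt S A r p g u s - bellman_opt S A r p g w s\<bar> \<le> g * sup_norm_on S (\<lambda>t. u t - w t)"
    if "s \<in> S" for u w s
    using bellman_opt_contraction[OF assms(1,2) that] .
qed (use assms in auto)

definition det_kernel :: "(nat \<Rightarrow> nat \<Rightarrow> nat) \<Rightarrow> nat \<Rightarrow> nat \<Rightarrow> nat \<Rightarrow> real" where
  "det_kernel nx s a t = (if t = nx s a then 1 else 0)"

lemma sum_det_kernel:
  assumes "finite S" "nx s a \<in> S"
  shows "(\<Sum>t\<in>S. det_kernel nx s a t * v t) = v (nx s a)"
proof -
  have "(\<Sum>t\<in>S. det_kernel nx s a t * v t) = (\<Sum>t\<in>S. if t = nx s a then v t else 0)"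
    by (rule sum.cong) (auto simp: det_kernel_def)
  also have "\<dots> = v (nx s a)" using assms by simp
  finally show ?thesis .
qed

lemma deterministic_mdp_det_kernel:
  assumes "finite S" "S \<noteq> {}" "finite A" "A \<noteq> {}" and closed: "\<forall>s\<in>S. \<forall>a\<in>A. nx s a \<in> S"
  shows "deterministic_mdp S A r (det_kernel nx)"
  using assms sum_det_kernel[OF \<open>finite S\<close>, of nx _ _ "\<lambda>_. 1"]
  unfolding deterministic_mdp_def is_mdp_def by (auto simp: det_kernel_def)

lemma bellman_pi_det_kernel:
  "finite S \<Longrightarrow> nx s (\<pi> s) \<in> S \<Longrightarrow>
    bellman_pi S r (det_kernel nx) g \<pi> v s = r s (\<pi> s) + g * v (nx s (\<pi> s))"
  by (simp add: bellman_pi_def sum_det_kernel)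

lemma bellman_opt_det_kernel:
  "finite S \<Longrightarrow> \<forall>a\<in>A. nx s a \<in> S \<Longrightarrow>
    bellman_opt S A r (det_kernel nx) g v s = Max ((\<lambda>a. r s a + g * v (nx s a)) ` A)"
  unfolding bellman_opt_def by (intro arg_cong[where f = Max] image_cong) (auto simp: sum_det_kernel)

definition chain_next :: "nat \<Rightarrow> nat \<Rightarrow> nat \<Rightarrow> nat" where
  "chain_next k s a = (if s = k \<and> a = 1 then k else s - 1)"

definition chain_reward :: "nat \<Rightarrow> real \<Rightarrow> nat \<Rightarrow> nat \<Rightarrow> real" where
  "chain_reward k C s a = (if s = k \<and> a = 1 then - C else 0)"

lemma chain_next_le: "s \<le> k \<Longrightarrow> chain_next k s a \<le> k"
  by (auto simp: chain_next_def)

lemma chain_deterministic: "deterministic_mdp {..k} {0, 1} (chain_reward k C) (det_kernel (chain_next k))"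
  by (rule deterministic_mdp_det_kernel) (auto simp: chain_next_le)

lemma chain_bellman_pi:
  "s \<le> k \<Longrightarrow> bellman_pi {..k} (chain_reward k C) (det_kernel (chain_next k)) g \<pi> v s =
     (if s = k \<and> \<pi> s = 1 then g * v k - C else g * v (s - 1))"
  using chain_next_le[of s k "\<pi> s"]
  by (simp add: bellman_pi_det_kernel) (auto simp: chain_next_def chain_reward_def)

lemma chain_bellman_opt:
  "s \<le> k \<Longrightarrow> bellman_opt {..k} {0, 1} (chain_reward k C) (det_kernel (chain_next k)) g v s =
     (if s = k then max (g * v (k - 1)) (g * v k - C) else g * v (s - 1))"
  by (simp add: bellman_opt_det_kernel chain_next_le) (simp add: chain_next_def chain_reward_def)

(* The chain
   equations are instantiated before calling auto, since the simplifier rewrites the action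
   set {0, 1} to {0, Suc 0} and would no longer match them as rewrite rules. *)
lemma chain_greedy_step_down:
  assumes "g * v k - C \<le> g * v (k - 1)"
  shows "greedy {..k} {0, 1} (chain_reward k C) (det_kernel (chain_next k)) g (\<lambda>_. 0) v"
  unfolding greedy_def is_policy_def
proof (intro conjI ballI)
  fix s assume "s \<in> {..k}"
  then show "bellman_pi {..k} (chain_reward k C) (det_kernel (chain_next k)) g (\<lambda>_. 0) v s
      = bellman_opt {..k} {0, 1} (chain_reward k C) (det_kernel (chain_next k)) g v s"
    using assms chain_bellman_pi[of s k C g "\<lambda>_. 0" v] chain_bellman_opt[of s k C g v] by auto
qed simp

lemma chain_greedy_stay:
  assumes "g * v (k - 1) \<le> g * v k - C"
  shows "greedy {..k} {0, 1} (chain_reward k C) (det_kernel (chain_next k)) g (\<lambda>_. 1) v"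
  unfolding greedy_def is_policy_def
proof (intro conjI ballI)
  fix s assume "s \<in> {..k}"
  then show "bellman_pi {..k} (chain_reward k C) (det_kernel (chain_next k)) g (\<lambda>_. 1) v s
      = bellman_opt {..k} {0, 1} (chain_reward k C) (det_kernel (chain_next k)) g v s"
    using assms chain_bellman_pi[of s k C g "\<lambda>_. 1" v] chain_bellman_opt[of s k C g v] by auto
qed simp

definition bump :: "nat \<Rightarrow> real \<Rightarrow> nat \<Rightarrow> real" where
  "bump i x s = (if s = i then x else 0)"

lemma span_on_bump:
  assumes "finite S" "i \<in> S" "j \<in> S" "j \<noteq> i"
  shows "span_on S (bump i x) = \<bar>x\<bar>"
proof -
  have "bump i x ` S = {x, 0}"
    using assms by (force simp: bump_def)
  then show ?thesis by (simp add: span_on_def max_def min_def)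
qed

lemma sup_norm_on_bump:
  assumes "finite S" "i \<in> S"
  shows "sup_norm_on S (bump i x) = \<bar>x\<bar>"
  unfolding sup_norm_on_def
  by (rule Max_eqI) (use assms in \<open>auto simp: bump_def\<close>)

(* With a nonnegative cost the optimal value is 0 (always step down) ... *)
lemma chain_value_opt:
  assumes "0 \<le> g" "g < 1" "0 \<le> C"
  shows "value_opt {..k} {0, 1} (chain_reward k C) (det_kernel (chain_next k)) g = (\<lambda>_. 0)"
proof (rule value_opt_eqI)
  show "is_mdp {..k} {0, 1} (chain_reward k C) (det_kernel (chain_next k))"
    using chain_deterministic by (simp add: deterministic_mdp_def)
  show "\<forall>s\<in>{..k}. bellman_opt {..k} {0, 1} (chain_reward k C) (det_kernel (chain_next k)) g (\<lambda>_. 0) s = 0"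
    using assms chain_bellman_opt[of _ k C g "\<lambda>_. 0"] by auto
qed (use assms in auto)

lemma chain_value_stay:
  assumes "0 \<le> g" "g < 1"
  shows "value_pi {..k} (chain_reward k C) (det_kernel (chain_next k)) g (\<lambda>_. 1) = bump k (- C / (1 - g))"
proof (rule value_pi_eqI)
  show "is_mdp {..k} {0, 1} (chain_reward k C) (det_kernel (chain_next k))"
    using chain_deterministic by (simp add: deterministic_mdp_def)
  show "\<forall>s\<in>{..k}. bellman_pi {..k} (chain_reward k C) (det_kernel (chain_next k)) g (\<lambda>_. 1)
          (bump k (- C / (1 - g))) s = bump k (- C / (1 - g)) s"
    using assms by (auto simp: chain_bellman_pi bump_def field_simps)
qed (use assms in \<open>auto simp: is_policy_def bump_def\<close>)

lemma chain_initial_gap: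
  assumes "0 \<le> g" "g < 1" "0 \<le> C" "1 \<le> k" "0 \<le> \<Delta>"
  shows "span_on {..k} (\<lambda>s. value_opt {..k} {0, 1} (chain_reward k C) (det_kernel (chain_next k)) g s
            - bump 1 \<Delta> s) = \<Delta>"
proof -
  have "(\<lambda>s. value_opt {..k} {0, 1} (chain_reward k C) (det_kernel (chain_next k)) g s - bump 1 \<Delta> s)
        = bump 1 (- \<Delta>)"
    unfolding chain_value_opt[OF assms(1-3)] by (auto simp: bump_def)
  then show ?thesis
    using span_on_bump[of "{..k}" 1 0 "- \<Delta>"] assms by simp
qed

lemma chain_final_loss:
  assumes "0 \<le> g" "g < 1" "0 \<le> C"
  shows "sup_norm_on {..k} (\<lambda>s. value_opt {..k} {0, 1} (chain_reward k C) (det_kernel (chain_next k)) g s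
            - value_pi {..k} (chain_reward k C) (det_kernel (chain_next k)) g (\<lambda>_. 1) s) = C / (1 - g)"
proof -
  have "(\<lambda>s. value_opt {..k} {0, 1} (chain_reward k C) (det_kernel (chain_next k)) g s
            - value_pi {..k} (chain_reward k C) (det_kernel (chain_next k)) g (\<lambda>_. 1) s)
        = bump k (C / (1 - g))"
    unfolding chain_value_opt[OF assms] chain_value_stay[OF assms(1,2)] by (auto simp: bump_def)
  then show ?thesis
    using sup_norm_on_bump[of "{..k}" k "C / (1 - g)"] assms by simp
qed

primrec avi_peak :: "real \<Rightarrow> real \<Rightarrow> real \<Rightarrow> nat \<Rightarrow> real" where
  "avi_peak g \<epsilon> \<Delta> 0 = \<Delta>"
| "avi_peak g \<epsilon> \<Delta> (Suc j) = g * avi_peak g \<epsilon> \<Delta> j + \<epsilon>"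

lemma avi_peak_nonneg: "0 \<le> g \<Longrightarrow> 0 \<le> \<epsilon> \<Longrightarrow> 0 \<le> \<Delta> \<Longrightarrow> 0 \<le> avi_peak g \<epsilon> \<Delta> j"
  by (induction j) auto

lemma avi_peak_closed_form:
  assumes "g \<noteq> 1"
  shows "avi_peak g \<epsilon> \<Delta> j = g ^ j * \<Delta> + (1 - g ^ j) / (1 - g) * \<epsilon>"
proof (induction j)
  case (Suc j)
  have "1 - g \<noteq> 0" using assms by simp
  then show ?case by (simp add: Suc.IH field_simps)
qed simp

(* The cost C = g h_(k-1) that makes the final greedy step as bad as possible. *)
lemma avi_final_cost:
  assumes "g \<noteq> 1" "1 \<le> k"
  shows "g * avi_peak g \<epsilon> \<Delta> (k - 1) = (g - g ^ k) / (1 - g) * \<epsilon> + g ^ k * \<Delta>"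
proof -
  obtain j where k: "k = Suc j" using assms(2) by (cases k) auto
  show ?thesis using assms(1) unfolding k by (simp add: avi_peak_closed_form field_simps)
qed

lemma avi_run_step:
  assumes "0 \<le> g" "0 \<le> \<epsilon>" "0 \<le> \<Delta>" "0 \<le> C" "j + 2 \<le> k"
  shows "greedy {..k} {0, 1} (chain_reward k C) (det_kernel (chain_next k)) g (\<lambda>_. 0)
           (bump (j + 1) (avi_peak g \<epsilon> \<Delta> j))"
    and "\<forall>s\<in>{..k}. bump (j + 2) (avi_peak g \<epsilon> \<Delta> (j + 1)) s =
           bellman_pi {..k} (chain_reward k C) (det_kernel (chain_next k)) g (\<lambda>_. 0)
             (bump (j + 1) (avi_peak g \<epsilon> \<Delta> j)) s + bump (j + 2) \<epsilon> s"
proof -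
  show "greedy {..k} {0, 1} (chain_reward k C) (det_kernel (chain_next k)) g (\<lambda>_. 0)
           (bump (j + 1) (avi_peak g \<epsilon> \<Delta> j))"
    using assms mult_nonneg_nonneg[OF assms(1) avi_peak_nonneg[OF assms(1-3), of j]]
    by (intro chain_greedy_step_down) (auto simp: bump_def)
  have "s - 1 = j + 1 \<longleftrightarrow> s = j + 2" for s :: nat by auto
  then show "\<forall>s\<in>{..k}. bump (j + 2) (avi_peak g \<epsilon> \<Delta> (j + 1)) s =
           bellman_pi {..k} (chain_reward k C) (det_kernel (chain_next k)) g (\<lambda>_. 0)
             (bump (j + 1) (avi_peak g \<epsilon> \<Delta> j)) s + bump (j + 2) \<epsilon> s"
    by (auto simp: chain_bellman_pi bump_def)
qed

lemma avi_run_last_greedy: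
  assumes "1 \<le> k"
  shows "greedy {..k} {0, 1} (chain_reward k (g * avi_peak g \<epsilon> \<Delta> (k - 1))) (det_kernel (chain_next k))
           g (\<lambda>_. 1) (bump k (avi_peak g \<epsilon> \<Delta> (k - 1)))"
  using assms by (intro chain_greedy_stay) (auto simp: bump_def)

theorem proposition1:
  fixes g \<epsilon> \<Delta> :: real and k :: nat
  assumes "0 \<le> g" "g < 1" "0 \<le> \<epsilon>" "0 \<le> \<Delta>" "1 \<le> k"
  shows "\<exists>(A :: nat set) (r :: nat \<Rightarrow> nat \<Rightarrow> real) (p :: nat \<Rightarrow> nat \<Rightarrow> nat \<Rightarrow> real)
            (v :: nat \<Rightarrow> nat \<Rightarrow> real) (err :: nat \<Rightarrow> nat \<Rightarrow> real) (\<pi> :: nat \<Rightarrow> nat \<Rightarrow> nat).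
    deterministic_mdp {..k} A r p \<and>
    span_on {..k} (\<lambda>s. value_opt {..k} A r p g s - v 0 s) = \<Delta> \<and>
    (\<forall>j\<in>{1..k-1}. span_on {..k} (err j) \<le> \<epsilon>) \<and>
    (\<forall>j. j + 1 \<le> k - 1 \<longrightarrow>
        greedy {..k} A r p g (\<pi> (j + 1)) (v j) \<and>
        (\<forall>s\<in>{..k}. v (j + 1) s = bellman_pi {..k} r p g (\<pi> (j + 1)) (v j) s + err (j + 1) s)) \<and>
    greedy {..k} A r p g (\<pi> k) (v (k - 1)) \<and>
    sup_norm_on {..k} (\<lambda>s. value_opt {..k} A r p g s - value_pi {..k} r p g (\<pi> k) s)
      = 1 / (1 - g) * ((g - g ^ k) / (1 - g) * \<epsilon> + g ^ k * \<Delta>)"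
proof -
  define C where "C = g * avi_peak g \<epsilon> \<Delta> (k - 1)"
  have "0 \<le> C" unfolding C_def using assms by (simp add: avi_peak_nonneg)
  let ?r = "chain_reward k C" and ?p = "det_kernel (chain_next k)"
  let ?v = "\<lambda>j. bump (Suc j) (avi_peak g \<epsilon> \<Delta> j)" and ?err = "\<lambda>j. bump (Suc j) \<epsilon>"
  let ?\<pi> = "\<lambda>j (_::nat). if j = k then 1 else (0::nat)"
  have mdp: "deterministic_mdp {..k} {0, 1} ?r ?p"
    by (rule chain_deterministic)
  have initial: "span_on {..k} (\<lambda>s. value_opt {..k} {0, 1} ?r ?p g s - ?v 0 s) = \<Delta>"
    using chain_initial_gap[OF assms(1,2) \<open>0 \<le> C\<close> assms(5,4)] by simp
  have errors: "\<forall>j\<in>{1..k-1}. span_on {..k} (?err j) \<le> \<epsilon>"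
    using span_on_bump[of "{..k}" _ 0 \<epsilon>] assms by auto
  have steps: "\<forall>j. j + 1 \<le> k - 1 \<longrightarrow> greedy {..k} {0, 1} ?r ?p g (?\<pi> (j + 1)) (?v j) \<and>
      (\<forall>s\<in>{..k}. ?v (j + 1) s = bellman_pi {..k} ?r ?p g (?\<pi> (j + 1)) (?v j) s + ?err (j + 1) s)"
    using avi_run_step[OF assms(1,3,4) \<open>0 \<le> C\<close>] by auto
  have last: "greedy {..k} {0, 1} ?r ?p g (?\<pi> k) (?v (k - 1))"
    using avi_run_last_greedy[OF assms(5)] assms(5) by (simp add: C_def)
  have loss: "sup_norm_on {..k} (\<lambda>s. value_opt {..k} {0, 1} ?r ?p g s - value_pi {..k} ?r ?p g (?\<pi> k) s)
      = 1 / (1 - g) * ((g - g ^ k) / (1 - g) * \<epsilon> + g ^ k * \<Delta>)"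
    using chain_final_loss[OF assms(1,2) \<open>0 \<le> C\<close>] avi_final_cost[of g k \<epsilon> \<Delta>] assms
    by (simp add: C_def)
  show ?thesis
    by (intro exI[of _ "{0, 1}"] exI[of _ ?r] exI[of _ ?p] exI[of _ ?v] exI[of _ ?err] exI[of _ ?\<pi>]
        conjI mdp initial errors steps last loss)
qed

end
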